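(* The number $4$ is extraordinary.
   Context: For a positive integer $n$, $\sigma(n)=\sum_{d\mid n} d$. For integers $n>1$ define $G(n)=\dfrac{\sigma(n)}{n\log\log n}$ (natural logarithms). A positive integer $N$ is called extraordinary if $N$ is composite and satisfies: (i) $G(N)\ge G(N/p)$ for every prime $p$ dividing $N$, and (ii) $G(N)\ge G(aN)$ for every positive integer $a$. One may use Robin's unconditional bound $G(n)<e^\gamma+\dfrac{0.6483}{(\log\log n)^2}$ for all $n>1$, where $\gamma$ is the Euler–Mascheroni constant. *)

theory Defs
  imports "HOL-Computational_Algebra.Primes" Complex_Main
begin

definition divisor_sigma :: "nat \<Rightarrow> nat" where
  "divisor_sigma n = (\<Sum>d\<in>{d. d dvd n \<and> d > 0}. d)"

definition G :: "nat \<Rightarrow> real" where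
  "G n = real (divisor_sigma n) / (real n * ln (ln (real n)))"

definition extraordinary :: "nat \<Rightarrow> bool" where
  "extraordinary N \<longleftrightarrow>
     N > 1 \<and> \<not> prime N \<and>
     (\<forall>p. prime p \<and> p dvd N \<longrightarrow> G N \<ge> G (N div p)) \<and>
     (\<forall>a. a > 0 \<longrightarrow> G N \<ge> G (a * N))"

end

theory Submission
  imports Defs "HOL-Analysis.Harmonic_Numbers" "HOL-Analysis.Convex"
begin

(* We have G 4 = sigma 4 / (4 ln ln 4) = 7 / (4 ln ln 4) > 5.228.  Condition (i) only concerns
   p = 2, and G 2 < 0 because ln ln 2 < 0.  Condition (ii) asks G (4a) \<le> G 4 for a \<ge> 2; it follows
   from an explicit, unconditional Robin-type inequality

       sigma n \<le> 5.228 n ln ln n        for all n \<ge> 8, *)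

lemma ln2_lower: "6924/10000 \<le> ln (2::real)"
  using ln_approx_bounds[of 2 3] by (simp add: eval_nat_numeral)

lemma ln_pow2_mult: "0 < r \<Longrightarrow> ln (2 ^ k * r) = real k * ln 2 + ln (r::real)"
  by (simp add: ln_mult ln_realpow)

lemma ln11_lower: "23929/10000 \<le> ln (11::real)"
proof -
  have "ln (11::real) = 3 * ln 2 + ln (11/8)" using ln_pow2_mult[of "11/8" 3] by simp
  moreover have "6/19 \<le> ln (11/8::real)" using ln_approx_bounds[of "11/8" 1] by simp
  ultimately show ?thesis using ln2_lower by linarith
qed

lemma ln29_bounds: "33634/10000 \<le> ln (29::real)" "ln (29::real) \<le> 33747/10000"
proof -
  have e: "ln (29::real) = 5 * ln 2 - ln (32/29)" using ln_pow2_mult[of "29/32" 5] by (simp add: ln_div)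
  have "6/61 \<le> ln (32/29::real)" "ln (32/29::real) \<le> 98441/1000000"
    using ln_approx_bounds[of "32/29" 1] by (simp_all add: eval_nat_numeral)
  then show "33634/10000 \<le> ln (29::real)" "ln (29::real) \<le> 33747/10000"
    using e ln2_lower ln2_le_25_over_36 by auto
qed

(* This is what makes 4 special: G 4 = 7 / (4 ln ln 4) is at least 5.228. *)
lemma lnln4_upper: "ln (ln (4::real)) \<le> 3347/10000"
proof -
  have "ln (4::real) = 2 * ln 2" using ln_pow2_mult[of 1 2] by simp
  then have "ln (4::real) \<le> 13892/10000" using ln2_le_25_over_36 by simp
  then have "ln (ln (4::real)) \<le> ln (13892/10000)" by (rule ln_mono) (use ln2_lower \<open>ln 4 = _\<close> in simp_all)
  also have "\<dots> \<le> 3347/10000" using ln_approx_bounds[of "13892/10000" 1] by (simp add: eval_nat_numeral)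
  finally show ?thesis .
qed

lemma ln_chord:
  fixes a b x :: real assumes "0 < a" "a \<le> x" "x \<le> b" "a < b"
  shows "((b - x) * ln a + (x - a) * ln b) / (b - a) \<le> ln x"
proof -
  define t where "t = (x - a) / (b - a)"
  have t: "0 \<le> t" "t \<le> 1" using assms by (auto simp: t_def field_simps)
  have "(1 - t) * ln a + t * ln b \<le> ln ((1 - t) *\<^sub>R a + t *\<^sub>R b)"
    by (rule concave_onD[OF ln_concave t]) (use assms in auto)
  moreover have "t * (b - a) = x - a" using assms by (simp add: t_def)
  then have "(1 - t) *\<^sub>R a + t *\<^sub>R b = x" by (simp add: algebra_simps)
  moreover have "1 - t = (b - x) / (b - a)" using assms by (simp add: t_def field_simps)
  then have "(1 - t) * ln a + t * ln b = ((b - x) * ln a + (x - a) * ln b) / (b - a)"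
    by (simp add: t_def add_divide_distrib)
  ultimately show ?thesis by simp
qed

lemma harm_le_one_plus_ln: "n > 0 \<Longrightarrow> harm n \<le> 1 + ln (real n :: real)"
proof -
  assume "n > 0"
  then obtain m where "n = Suc m" by (cases n) auto
  have "harm (Suc m) - ln (real (Suc m)) \<le> harm (Suc 0) - ln (real (Suc 0))"
    using decseq_harm_diff_ln[unfolded decseq_def, rule_format, of 0 m] by simp
  then show ?thesis using \<open>n = Suc m\<close> by (simp add: harm_def)
qed

lemma exp_le_power_inverse:
  fixes z :: real assumes "0 \<le> z" "z < real k"
  shows "exp z \<le> (1 / (1 - z / real k)) ^ k"
proof -
  have k: "real k > 0" using assms by linarith
  have "1 - z / real k \<le> exp (- (z / real k))" using exp_ge_add_one_self[of "- (z / real k)"] by simp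
  then have "exp (z / real k) \<le> 1 / (1 - z / real k)"
    using assms k by (simp add: exp_minus field_simps)
  then have "exp (z / real k) ^ k \<le> (1 / (1 - z / real k)) ^ k" by (rule power_mono) simp
  then show ?thesis using k by (simp flip: exp_of_nat_mult)
qed

lemma finite_divisors: "n > 0 \<Longrightarrow> finite {d::nat. d dvd n \<and> d > 0}"
  by (rule finite_subset[of _ "{..n}"]) (auto dest: dvd_imp_le)

lemma geometric_sum_le:
  fixes p :: real assumes "p > 1"
  shows "(\<Sum>i\<le>k. p ^ i) \<le> p ^ k * (p / (p - 1))"
proof -
  have "(\<Sum>i\<le>k. p ^ i) * (p - 1) = p ^ Suc k - 1"
    by (induction k) (simp_all add: algebra_simps)
  then show ?thesis using assms by (simp add: field_simps)
qed

(* Every divisor of p^k m has the form p^i e with i \<le> k and e dividing m, so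
   sigma (p^k m) \<le> (1 + p + ... + p^k) sigma m (with equality when p does not divide m). *)
lemma sigma_prime_power_mult_le:
  assumes p: "prime p" and m: "m > 0"
  shows "real (divisor_sigma (p ^ k * m)) \<le> (\<Sum>i\<le>k. real p ^ i) * real (divisor_sigma m)"
proof -
  define D where "D = (\<lambda>x::nat. {d. d dvd x \<and> d > 0})"
  have finD: "finite (D m)" unfolding D_def using m by (rule finite_divisors)
  have cover: "D (p ^ k * m) \<subseteq> (\<lambda>(i, e). p ^ i * e) ` ({..k} \<times> D m)"
  proof
    fix d assume "d \<in> D (p ^ k * m)"
    then have "d dvd p ^ k * m" "d > 0" unfolding D_def by auto
    then obtain x y where xy: "d = x * y" "x dvd p ^ k" "y dvd m" using dvd_productE by blast
    then obtain i where i: "i \<le> k" "x = p ^ i" using divides_primepow_nat[OF p] by blast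
    have "y > 0" using xy m by (metis dvd_0_left_iff gr0I)
    then show "d \<in> (\<lambda>(i, e). p ^ i * e) ` ({..k} \<times> D m)"
      using xy i unfolding D_def by (auto intro!: image_eqI[of _ _ "(i, y)"])
  qed
  have "real (divisor_sigma (p ^ k * m)) = (\<Sum>d\<in>D (p ^ k * m). real d)"
    unfolding divisor_sigma_def D_def by simp
  also have "\<dots> \<le> (\<Sum>d\<in>(\<lambda>(i, e). p ^ i * e) ` ({..k} \<times> D m). real d)"
    by (rule sum_mono2[OF _ cover]) (use finD in auto)
  also have "\<dots> \<le> (\<Sum>(i, e)\<in>{..k} \<times> D m. real (p ^ i * e))"
    using sum_image_le[of "{..k} \<times> D m" real "\<lambda>(i, e). p ^ i * e"] finD
    by (simp add: comp_def case_prod_unfold)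
  also have "\<dots> = (\<Sum>i\<le>k. real p ^ i) * (\<Sum>e\<in>D m. real e)"
    by (simp add: sum.cartesian_product[symmetric] sum_product)
  also have "(\<Sum>e\<in>D m. real e) = real (divisor_sigma m)"
    unfolding divisor_sigma_def D_def by simp
  finally show ?thesis .
qed

lemma prime_factors_prime_power_mult:
  fixes p m :: nat
  assumes p: "prime p" and k: "k \<ge> 1" and m: "m > 0"
  shows "prime_factors (p ^ k * m) = insert p (prime_factors m)"
proof -
  have "p ^ k * m \<noteq> 0" using m prime_gt_0_nat[OF p] by simp
  then have "prime_factors (p ^ k * m) = {q. prime q \<and> q dvd p ^ k * m}"
    by (rule prime_factors_dvd)
  also have "\<dots> = insert p {q. prime q \<and> q dvd m}"
    using p k by (auto simp: prime_dvd_mult_iff prime_dvd_power_iff primes_dvd_imp_eq)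
  finally show ?thesis using m by (simp add: prime_factors_dvd)
qed

lemma sigma_le_euler_factors:
  "n > 0 \<Longrightarrow> real (divisor_sigma n) \<le> real n * (\<Prod>p\<in>prime_factors n. real p / (real p - 1))"
proof (induction n rule: less_induct)
  case (less n)
  show ?case
  proof (cases "n = 1")
    case True
    have "{d::nat. d dvd 1 \<and> d > 0} = {1}" by auto
    then show ?thesis using True by (simp add: divisor_sigma_def)
  next
    case False
    then obtain p where p: "prime p" "p dvd n" using prime_factor_nat by blast
    define k where "k = multiplicity p n"
    define m where "m = n div p ^ k"
    have nm: "n = p ^ k * m" unfolding m_def k_def by (simp add: multiplicity_dvd)
    have p_not_dvd_m: "\<not> p dvd m"
      unfolding m_def k_def by (rule multiplicity_decompose) (use less.prems p in auto)
    have k: "k \<ge> 1" unfolding k_def using p less.prems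
      by (simp add: Suc_le_eq prime_multiplicity_gt_zero_iff)
    have p2: "real p \<ge> 2" using prime_ge_2_nat[OF p(1)] by simp
    have m0: "m > 0" using nm less.prems by (cases "m = 0") auto
    have "1 < p ^ k" using k prime_gt_1_nat[OF p(1)] by (intro one_less_power) auto
    then have "m < n" using nm m0 by simp
    have factors: "prime_factors n = insert p (prime_factors m)"
      unfolding nm by (rule prime_factors_prime_power_mult[OF p(1) k m0])
    have "real (divisor_sigma n) \<le> (\<Sum>i\<le>k. real p ^ i) * real (divisor_sigma m)"
      unfolding nm by (rule sigma_prime_power_mult_le[OF p(1) m0])
    also have "\<dots> \<le> (real p ^ k * (real p / (real p - 1)))
                    * (real m * (\<Prod>q\<in>prime_factors m. real q / (real q - 1)))"
      by (rule mult_mono[OF geometric_sum_le less.IH[OF \<open>m < n\<close> m0]]) (use p2 in auto)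
    also have "\<dots> = real n * (\<Prod>q\<in>prime_factors n. real q / (real q - 1))"
    proof -
      have "p \<notin> prime_factors m" using p_not_dvd_m by auto
      then have "(\<Prod>q\<in>prime_factors n. real q / (real q - 1))
                   = real p / (real p - 1) * (\<Prod>q\<in>prime_factors m. real q / (real q - 1))"
        by (simp add: factors)
      moreover have "real n = real p ^ k * real m" by (simp add: nm)
      ultimately show ?thesis by (simp only:) (simp add: algebra_simps)
    qed
    finally show ?thesis .
  qed
qed

(* sigma n / n = sum over divisors d of 1/d \<le> H_n \<le> 1 + ln n; good enough for small n. *)
lemma sigma_le_harm: assumes "n > 0" shows "real (divisor_sigma n) \<le> real n * (1 + ln (real n))"
proof -
  define D where "D = {d::nat. d dvd n \<and> d > 0}"
  have "real (divisor_sigma n) = (\<Sum>d\<in>D. real d)" unfolding divisor_sigma_def D_def by simp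
  also have "\<dots> = (\<Sum>d\<in>D. real (n div d))"
    by (rule sum.reindex_bij_witness[of _ "\<lambda>d. n div d" "\<lambda>d. n div d"])
       (use assms in \<open>auto simp: D_def div_div_eq_right elim!: dvdE intro: dvd_triv_left\<close>)
  also have "\<dots> = real n * (\<Sum>d\<in>D. inverse (real d))"
    by (simp add: sum_distrib_left D_def real_of_nat_div field_simps)
  also have "(\<Sum>d\<in>D. inverse (real d)) \<le> harm n"
    unfolding harm_def by (rule sum_mono2) (use assms in \<open>auto simp: D_def dvd_imp_le Suc_le_eq\<close>)
  also have "harm n \<le> 1 + ln (real n)" by (rule harm_le_one_plus_ln[OF assms])
  finally show ?thesis by (simp add: mult_left_mono)
qed

definition primes_upto :: "nat \<Rightarrow> nat set" where
  "primes_upto N = {p. prime p \<and> p \<le> N}"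

lemma finite_primes_upto [simp]: "finite (primes_upto N)"
  unfolding primes_upto_def by (rule finite_subset[of _ "{..N}"]) auto

lemma primes_upto_Suc:
  "primes_upto (Suc N) = (if prime (Suc N) then insert (Suc N) (primes_upto N) else primes_upto N)"
  unfolding primes_upto_def by (auto simp: le_Suc_eq)

lemma Suc_notin_primes_upto [simp]: "Suc N \<notin> primes_upto N"
  unfolding primes_upto_def by simp

lemma primes_upto_mono: "M \<le> N \<Longrightarrow> primes_upto M \<subseteq> primes_upto N"
  unfolding primes_upto_def by auto

lemma prod_primes_dvd:
  fixes x :: nat
  assumes "finite A" "\<And>p. p \<in> A \<Longrightarrow> prime p \<and> p dvd x"
  shows "\<Prod>A dvd x"
  using assms
proof (induction A rule: finite_induct)
  case (insert p A)
  have "coprime p (\<Prod>A)"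
    using insert by (intro prod_coprime_right) (metis insertCI primes_coprime)
  then show ?case using insert by (simp add: divides_mult)
qed simp

(* The middle binomial coefficient of row 2m+1 is at most 4^m (it occurs twice in a row of sum 2^(2m+1)). *)
lemma binomial_odd_central_le: "(2 * m + 1 choose m) \<le> (4::nat) ^ m"
proof -
  have sym: "(2 * m + 1 choose m) = (2 * m + 1 choose (m + 1))"
    using binomial_symmetric[of m "2 * m + 1"] by simp
  have "(2 * m + 1 choose m) + (2 * m + 1 choose (m + 1)) = (\<Sum>k\<in>{m, m + 1}. 2 * m + 1 choose k)"
    by simp
  also have "\<dots> \<le> (\<Sum>k\<le>2 * m + 1. 2 * m + 1 choose k)" by (rule sum_mono2) auto
  also have "\<dots> = 2 ^ (2 * m + 1)" by (rule choose_row_sum)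
  finally show ?thesis using sym by (simp add: power_mult)
qed

(* Every prime in ]m+1, 2m+1] divides (2m+1 choose m) = (2m+1)! / (m! (m+1)!). *)
lemma prod_middle_primes_dvd_binomial:
  "\<Prod>{p. prime p \<and> m + 1 < p \<and> p \<le> 2 * m + 1} dvd (2 * m + 1 choose m)"
proof (rule prod_primes_dvd)
  show "finite {p. prime p \<and> m + 1 < p \<and> p \<le> 2 * m + 1}" by simp
next
  fix p assume "p \<in> {p. prime p \<and> m + 1 < p \<and> p \<le> 2 * m + 1}"
  then have p: "prime p" "m + 1 < p" "p \<le> 2 * m + 1" by auto
  have "fact m * fact (m + 1) * (2 * m + 1 choose m) = (fact (2 * m + 1) :: nat)"
    using binomial_fact_lemma[of m "2 * m + 1"] by (simp add: mult_2)
  moreover have "p dvd (fact (2 * m + 1) :: nat)" using p prime_dvd_fact_iff[of p "2 * m + 1"] by blast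
  moreover have "\<not> p dvd (fact m :: nat)" "\<not> p dvd (fact (m + 1) :: nat)"
    using p prime_dvd_fact_iff[of p m] prime_dvd_fact_iff[of p "m + 1"] by auto
  ultimately show "prime p \<and> p dvd (2 * m + 1 choose m)"
    using p by (metis prime_dvd_mult_iff)
qed

lemma primorial_odd_le: "\<Prod>(primes_upto (2 * m + 1)) \<le> 4 ^ m * \<Prod>(primes_upto (m + 1))"
proof -
  define Q where "Q = {p. prime p \<and> m + 1 < p \<and> p \<le> 2 * m + 1}"
  have "primes_upto (2 * m + 1) = Q \<union> primes_upto (m + 1)" "Q \<inter> primes_upto (m + 1) = {}" "finite Q"
    unfolding Q_def primes_upto_def by auto
  then have split: "\<Prod>(primes_upto (2 * m + 1)) = \<Prod>Q * \<Prod>(primes_upto (m + 1))"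
    by (simp add: prod.union_disjoint)
  have "\<Prod>Q \<le> (2 * m + 1 choose m)"
    unfolding Q_def by (rule dvd_imp_le[OF prod_middle_primes_dvd_binomial]) simp
  also have "\<dots> \<le> 4 ^ m" by (rule binomial_odd_central_le)
  finally show ?thesis unfolding split by (rule mult_le_mono1)
qed

lemma primorial_le: "\<Prod>(primes_upto N) \<le> 4 ^ N"
proof (induction N rule: less_induct)
  case (less N)
  consider "N \<le> 2" | "N > 2" "even N" | m where "N = 2 * m + 1" "m \<ge> 1"
  proof -
    have "N \<le> 2 \<or> (N > 2 \<and> even N) \<or> (\<exists>m. N = 2 * m + 1 \<and> m \<ge> 1)" by presburger
    then show ?thesis using that by blast
  qed
  then show ?case
  proof cases
    case 1
    then have "primes_upto N \<subseteq> {2}"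
      by (auto simp: primes_upto_def dest: prime_gt_1_nat)
    then consider "primes_upto N = {}" | "primes_upto N = {2}" by blast
    then show ?thesis
    proof cases
      case 2
      then have "2 \<in> primes_upto N" by simp
      then have "1 \<le> N" by (simp add: primes_upto_def)
      then have "4 ^ 1 \<le> (4::nat) ^ N" by (rule power_increasing) simp
      then show ?thesis using 2 by simp
    qed simp
  next
    case 2
    have "\<not> prime N" using 2 by (auto simp: prime_odd_nat)
    then have "primes_upto N = primes_upto (N - 1)"
      using primes_upto_Suc[of "N - 1"] 2 by simp
    also have "\<Prod>\<dots> \<le> 4 ^ (N - 1)" using less.IH[of "N - 1"] 2 by simp
    also have "\<dots> \<le> 4 ^ N" by (rule power_increasing) auto
    finally show ?thesis .
  next
    case 3
    have "\<Prod>(primes_upto N) \<le> 4 ^ m * \<Prod>(primes_upto (m + 1))"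
      unfolding 3 by (rule primorial_odd_le)
    also have "\<dots> \<le> 4 ^ m * 4 ^ (m + 1)" using less.IH[of "m + 1"] 3 by simp
    also have "\<dots> = 4 ^ N" unfolding 3 by (simp flip: power_add)
    finally show ?thesis .
  qed
qed

lemma chebyshev_theta_le: "(\<Sum>p\<in>primes_upto N. ln (real p)) \<le> real N * ln 4"
proof -
  have pos: "\<And>p. p \<in> primes_upto N \<Longrightarrow> real p > 0"
    by (auto simp: primes_upto_def prime_gt_0_nat)
  have "(\<Sum>p\<in>primes_upto N. ln (real p)) = ln (real (\<Prod>(primes_upto N)))"
    using pos by (simp add: ln_prod of_nat_prod)
  also have "\<dots> \<le> ln (real (4 ^ N))"
  proof (rule ln_mono)
    show "real (\<Prod>(primes_upto N)) \<le> real (4 ^ N)" by (simp only: of_nat_le_iff primorial_le)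
    show "0 < real (\<Prod>(primes_upto N))" using pos by (simp add: of_nat_prod prod_pos)
  qed
  also have "\<dots> = real N * ln 4" by (simp add: ln_realpow)
  finally show ?thesis .
qed

lemma prod_prime_factors_le: fixes m :: nat assumes "m > 0" shows "\<Prod>(prime_factors m) \<le> m"
proof -
  have "\<Prod>(prime_factors m) \<le> (\<Prod>p\<in>prime_factors m. p ^ multiplicity p m)"
  proof (rule prod_mono)
    fix p assume p: "p \<in> prime_factors m"
    then have "multiplicity p m \<ge> 1" using assms
      by (simp add: Suc_le_eq prime_multiplicity_gt_zero_iff in_prime_factors_iff)
    then show "0 \<le> p \<and> p \<le> p ^ multiplicity p m"
      using prime_gt_0_nat[OF in_prime_factors_imp_prime[OF p]]
      by (simp add: self_le_power)
  qed
  also have "\<dots> = m" using prime_factorization_nat[OF assms] by simp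
  finally show ?thesis .
qed

lemma sum_ln_prime_factors_le: assumes "m > 0" shows "(\<Sum>p\<in>prime_factors m. ln (real p)) \<le> ln (real m)"
proof -
  have pos: "\<And>p. p \<in> prime_factors m \<Longrightarrow> p > 0" by (auto dest: in_prime_factors_imp_prime prime_gt_0_nat)
  have "(\<Sum>p\<in>prime_factors m. ln (real p)) = ln (real (\<Prod>(prime_factors m)))"
    using pos by (simp add: ln_prod of_nat_prod)
  also have "\<dots> \<le> ln (real m)"
  proof (rule ln_mono)
    show "real (\<Prod>(prime_factors m)) \<le> real m" by (simp only: of_nat_le_iff prod_prime_factors_le[OF assms])
    show "0 < real (\<Prod>(prime_factors m))" using pos by (simp add: of_nat_prod prod_pos)
  qed
  finally show ?thesis .
qed

(* The p-part of N! contributes at least ln p * (N div p) to ln N! (Legendre), summed over p \<le> N;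
   proved by induction, the increment at N+1 being the logarithm of the radical of N+1. *)
lemma legendre_ln_fact_ge: "(\<Sum>p\<in>primes_upto N. ln (real p) * real (N div p)) \<le> ln (fact N)"
proof (induction N)
  case 0 then show ?case by (simp add: primes_upto_def)
next
  case (Suc N)
  have "(\<Sum>p\<in>primes_upto (Suc N). ln (real p) * real (Suc N div p))
      = (\<Sum>p\<in>primes_upto (Suc N). ln (real p) * real (N div p))
        + (\<Sum>p\<in>primes_upto (Suc N). if p dvd Suc N then ln (real p) else 0)"
    unfolding sum.distrib[symmetric]
    by (rule sum.cong[OF refl]) (simp add: div_Suc dvd_eq_mod_eq_0 distrib_left)
  also have "(\<Sum>p\<in>primes_upto (Suc N). ln (real p) * real (N div p))
      = (\<Sum>p\<in>primes_upto N. ln (real p) * real (N div p))"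
    by (simp add: primes_upto_Suc)
  also have "(\<Sum>p\<in>primes_upto (Suc N). if p dvd Suc N then ln (real p) else 0)
      = (\<Sum>p\<in>prime_factors (Suc N). ln (real p))"
  proof -
    have "{p \<in> primes_upto (Suc N). p dvd Suc N} = prime_factors (Suc N)"
      unfolding primes_upto_def by (auto simp: prime_factors_dvd dvd_imp_le)
    then show ?thesis by (simp add: sum.inter_filter[symmetric])
  qed
  also have "\<dots> \<le> ln (real (Suc N))" by (rule sum_ln_prime_factors_le) simp
  finally show ?case using Suc.IH by (simp add: ln_mult add.commute)
qed

lemma ln_fact_le: "N \<ge> 1 \<Longrightarrow> ln (fact N :: real) \<le> real N * ln (real N) - real N + 1 + ln (real N)"
proof (induction N rule: dec_induct)
  case (step N)
  have N: "real N \<ge> 1" using step by simp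
  have "(1 / real N) / (1 + 1 / real N) \<le> ln (1 / real N + 1)" by (rule ln_add1_ge) (use N in simp)
  also have "1 / real N + 1 = real (Suc N) / real N" using N by (simp add: field_simps)
  also have "(1 / real N) / (1 + 1 / real N) = 1 / real (Suc N)" using N by (simp add: field_simps)
  finally have "1 \<le> (real N + 1) * (ln (real (Suc N)) - ln (real N))"
    using N by (simp add: ln_div field_simps)
  then have "real N * ln (real N) + ln (real N) + 1 \<le> real (Suc N) * ln (real (Suc N))"
    by (simp add: algebra_simps)
  moreover have "ln (fact (Suc N) :: real) = ln (real (Suc N)) + ln (fact N)" by (simp add: ln_mult)
  moreover have "real (Suc N) = real N + 1" by simp
  ultimately show ?case using step.IH by linarith
qed simp

definition mertens_sum :: "nat \<Rightarrow> real" where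
  "mertens_sum N = (\<Sum>p\<in>primes_upto N. ln (real p) / real p)"

(* Mertens' first theorem, in the explicit one-sided form needed here: combining
   N ln p / p - ln p \<le> ln p * (N div p), Legendre, the bound on ln N! and Chebyshev. *)
lemma mertens_sum_le: assumes N: "N \<ge> 5" shows "mertens_sum N \<le> ln (real N) + 1/2"
proof -
  have floor_bound: "(real N + 1) * (ln (real p) / real p) - ln (real p) \<le> ln (real p) * real (N div p)"
    if "p \<in> primes_upto N" for p
  proof -
    have p: "p > 0" using that by (auto simp: primes_upto_def prime_gt_0_nat)
    have "N + 1 \<le> p * (N div p) + p"
      using mult_div_mod_eq[of p N] mod_less_divisor[OF p, of N] by linarith
    then have "(real N + 1) / real p \<le> real (N div p) + 1"
      using p by (simp add: field_simps flip: of_nat_mult of_nat_add)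
    then have "ln (real p) * ((real N + 1) / real p) \<le> ln (real p) * (real (N div p) + 1)"
      using p by (intro mult_left_mono) auto
    then show ?thesis by (simp add: algebra_simps)
  qed
  have "(real N + 1) * mertens_sum N - (\<Sum>p\<in>primes_upto N. ln (real p))
      = (\<Sum>p\<in>primes_upto N. (real N + 1) * (ln (real p) / real p) - ln (real p))"
    by (simp add: mertens_sum_def sum_distrib_left sum_subtractf)
  also have "\<dots> \<le> (\<Sum>p\<in>primes_upto N. ln (real p) * real (N div p))"
    by (rule sum_mono) (rule floor_bound)
  also have "\<dots> \<le> ln (fact N)" by (rule legendre_ln_fact_ge)
  also have "\<dots> \<le> real N * ln (real N) - real N + 1 + ln (real N)" by (rule ln_fact_le) (use N in simp)
  finally have "(real N + 1) * mertens_sum N \<le> real N * ln (real N) - real N + 1 + ln (real N) + real N * ln 4"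
    using chebyshev_theta_le[of N] by linarith
  also have "\<dots> \<le> (real N + 1) * (ln (real N) + 1/2)"
  proof -
    have "ln (4::real) = 2 * ln 2" using ln_pow2_mult[of 1 2] by simp
    then have "real N * ln 4 \<le> real N * (13892/10000)"
      using ln2_le_25_over_36 by (intro mult_left_mono) auto
    moreover have "(real N + 1) * (ln (real N) + 1/2)
                     = real N * ln (real N) + ln (real N) + real N / 2 + 1/2"
      by (simp add: algebra_simps)
    moreover have "real N \<ge> 5" using N by simp
    ultimately show ?thesis by linarith
  qed
  finally show ?thesis by (simp add: mult_le_cancel_left_pos add_pos_nonneg)
qed

(* One step of partial summation against 1 / ln t: if T \<le> u = ln N < v = ln (N+1), then
   T (1/v - 1/u) + ln v - ln u \<ge> 0, by ln (u/v) \<le> u/v - 1. *)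
lemma abel_increment_nonneg:
  fixes u v T :: real
  assumes "0 < u" "u < v" "T \<le> u"
  shows "0 \<le> T * (1 / v - 1 / u) + (ln v - ln u)"
proof -
  have "u * (1 / v - 1 / u) \<le> T * (1 / v - 1 / u)"
    using assms by (intro mult_right_mono_neg) (auto simp: field_simps)
  moreover have "u * (1 / v - 1 / u) = u / v - 1" using assms by (simp add: field_simps)
  moreover have "ln (u / v) \<le> u / v - 1" by (rule ln_le_minus_one) (use assms in simp)
  moreover have "ln (u / v) = ln u - ln v" using assms by (simp add: ln_div)
  ultimately show ?thesis by linarith
qed

(* Partial (Abel) summation: from Mertens' first theorem, sum over P0 < p \<le> N of 1/(p-1) is
   bounded by ln ln N - ln ln P0 plus explicit boundary terms. *)
lemma reciprocal_primes_abel: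
  assumes P0: "P0 \<ge> 2" and mertens: "\<And>m. m \<ge> P0 \<Longrightarrow> mertens_sum m \<le> ln (real m) + c"
    and N: "N \<ge> P0"
  shows "(\<Sum>p\<in>primes_upto N - primes_upto P0. 1 / (real p - 1))
           \<le> (mertens_sum N - c) / ln (real N) + ln (ln (real N))
              - (mertens_sum P0 - c) / ln (real P0) - ln (ln (real P0)) + 1 / real P0 - 1 / real N"
  using N
proof (induction N rule: dec_induct)
  case (step N)
  define S where "S = mertens_sum N - c"
  have N2: "real N \<ge> 2" using step P0 by simp
  have lnN: "0 < ln (real N)" and ln_less: "ln (real N) < ln (real (Suc N))" using N2 by simp_all
  have increment: "0 \<le> S * (1 / ln (real (Suc N)) - 1 / ln (real N))
                         + (ln (ln (real (Suc N))) - ln (ln (real N)))"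
    unfolding S_def by (rule abel_increment_nonneg[OF lnN ln_less]) (use mertens[of N] step in simp)
  show ?case
  proof (cases "prime (Suc N)")
    case True
    have "primes_upto (Suc N) - primes_upto P0 = insert (Suc N) (primes_upto N - primes_upto P0)"
      using True step by (auto simp: primes_upto_Suc primes_upto_def)
    then have sum_Suc: "(\<Sum>p\<in>primes_upto (Suc N) - primes_upto P0. 1 / (real p - 1))
        = (\<Sum>p\<in>primes_upto N - primes_upto P0. 1 / (real p - 1)) + 1 / real N"
      by simp
    have S_Suc: "mertens_sum (Suc N) - c = S + ln (real (Suc N)) / real (Suc N)"
      using True by (simp add: S_def mertens_sum_def primes_upto_Suc)
    have "(S + ln (real (Suc N)) / real (Suc N)) / ln (real (Suc N))
                     = S / ln (real (Suc N)) + 1 / real (Suc N)"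
      using lnN ln_less N2 by (simp add: add_divide_distrib)
    moreover have "S * (1 / ln (real (Suc N)) - 1 / ln (real N)) = S / ln (real (Suc N)) - S / ln (real N)"
      by (simp add: algebra_simps)
    ultimately show ?thesis using step.IH increment unfolding sum_Suc S_Suc S_def by linarith
  next
    case False
    have S_Suc: "mertens_sum (Suc N) = mertens_sum N"
      using False by (simp add: mertens_sum_def primes_upto_Suc)
    have "S * (1 / ln (real (Suc N)) - 1 / ln (real N)) = S / ln (real (Suc N)) - S / ln (real N)"
      by (simp add: algebra_simps)
    moreover have "1 / real (Suc N) \<le> 1 / real N" using N2 by (simp add: frac_le)
    moreover have "primes_upto (Suc N) = primes_upto N" using False by (simp add: primes_upto_Suc)
    ultimately show ?thesis using step.IH increment unfolding S_Suc S_def by simp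
  qed
qed simp

lemma ln_ge_pow2: assumes "2 ^ k \<le> p" shows "real k * ln 2 \<le> ln (real p)"
proof -
  have "real (2 ^ k) \<le> real p" using assms by (simp only: of_nat_le_iff)
  then have "ln ((2::real) ^ k) \<le> ln (real p)" by (intro ln_mono) simp_all
  then show ?thesis by (simp add: ln_realpow)
qed

(* The primes up to 29: a number below 30 coprime to 2, 3 and 5 is 1 or a prime. *)
lemma primes_upto_29: "primes_upto 29 = {2, 3, 5, 7, 11, 13, 17, 19, 23, 29}"
proof
  show "primes_upto 29 \<subseteq> {2, 3, 5, 7, 11, 13, 17, 19, 23, 29}"
  proof
    fix p assume "p \<in> primes_upto 29"
    then have p: "prime p" "p \<le> 29" by (auto simp: primes_upto_def)
    have only_trivial_divisors: "q dvd p \<Longrightarrow> q = 1 \<or> q = p" for q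
      using p(1) by (simp add: prime_nat_iff)
    have "p > 1" using prime_gt_1_nat[OF p(1)] .
    moreover have "2 dvd p \<Longrightarrow> p = 2" "3 dvd p \<Longrightarrow> p = 3" "5 dvd p \<Longrightarrow> p = 5"
      using only_trivial_divisors by force+
    ultimately show "p \<in> {2, 3, 5, 7, 11, 13, 17, 19, 23, 29}" using p(2) by simp presburger
  qed
  have "prime (3::nat)" "prime (5::nat)" "prime (7::nat)" "prime (11::nat)" "prime (13::nat)"
    "prime (17::nat)" "prime (19::nat)" "prime (23::nat)" "prime (29::nat)"
    by (simp_all add: prime_nat_iff' atLeastLessThan_upt upt_rec)
  then show "{2, 3, 5, 7, 11, 13, 17, 19, 23, 29} \<subseteq> primes_upto 29"
    using two_is_prime_nat by (auto simp: primes_upto_def)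
qed

lemma mertens_sum_29_ge: "1925/1000 \<le> mertens_sum 29"
proof -
  have "mertens_sum 29 = ln 2/2 + ln 3/3 + ln 5/5 + ln 7/7 + ln 11/11 + ln 13/13 + ln 17/17
                         + ln 19/19 + ln 23/23 + ln 29/29"
    by (simp add: mertens_sum_def primes_upto_29)
  moreover have "1 * ln 2 \<le> ln (3::real)" "2 * ln 2 \<le> ln (5::real)" "2 * ln 2 \<le> ln (7::real)"
    "3 * ln 2 \<le> ln (11::real)" "3 * ln 2 \<le> ln (13::real)" "4 * ln 2 \<le> ln (17::real)"
    "4 * ln 2 \<le> ln (19::real)" "4 * ln 2 \<le> ln (23::real)" "4 * ln 2 \<le> ln (29::real)"
    using ln_ge_pow2[of 1 3] ln_ge_pow2[of 2 5] ln_ge_pow2[of 2 7] ln_ge_pow2[of 3 11]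
      ln_ge_pow2[of 3 13] ln_ge_pow2[of 4 17] ln_ge_pow2[of 4 19] ln_ge_pow2[of 4 23]
      ln_ge_pow2[of 4 29] by simp_all
  ultimately show ?thesis using ln2_lower by linarith
qed

lemma reciprocal_prime_tail_le:
  assumes N: "N \<ge> 29"
  shows "(\<Sum>p\<in>primes_upto N - primes_upto 29. 1 / (real p - 1))
           \<le> ln (ln (real N)) - ln (ln 29) + 6123/10000"
proof -
  have mertens: "mertens_sum m \<le> ln (real m) + 1/2" if "m \<ge> 29" for m
    by (rule mertens_sum_le) (use that in simp)
  have abel: "(\<Sum>p\<in>primes_upto N - primes_upto 29. 1 / (real p - 1))
      \<le> (mertens_sum N - 1/2) / ln (real N) + ln (ln (real N))
         - (mertens_sum 29 - 1/2) / ln 29 - ln (ln 29) + 1 / 29 - 1 / real N"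
    using reciprocal_primes_abel[of 29 "1/2" N] mertens N by simp
  have "ln (real N) > 0" using N by simp
  then have "(mertens_sum N - 1/2) / ln (real N) \<le> 1"
    using mertens[OF N] by (simp add: divide_le_eq)
  moreover have "14250/33747 \<le> (mertens_sum 29 - 1/2) / ln (29::real)"
  proof -
    have "(1425/1000) / (33747/10000) \<le> (mertens_sum 29 - 1/2) / ln (29::real)"
      using mertens_sum_29_ge ln29_bounds by (intro frac_le) auto
    then show ?thesis by simp
  qed
  moreover have "1 / real N \<ge> 0" by simp
  ultimately show ?thesis using abel by linarith
qed

definition euler_prod :: "nat \<Rightarrow> real" where
  "euler_prod N = (\<Prod>p\<in>primes_upto N. real p / (real p - 1))"

lemma euler_factor_eq: "prime p \<Longrightarrow> real p / (real p - 1) = 1 + 1 / (real p - 1)"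
  using prime_ge_2_nat[of p] by (simp add: field_simps)

lemma euler_factor_ge_1: "prime p \<Longrightarrow> 1 \<le> real p / (real p - 1)"
  using prime_ge_2_nat[of p] by (simp add: euler_factor_eq)

lemma euler_prod_ge_1: "1 \<le> euler_prod N"
  unfolding euler_prod_def by (intro prod_ge_1) (simp add: primes_upto_def euler_factor_ge_1)

lemma euler_prod_29: "euler_prod 29 = 2*(3/2)*(5/4)*(7/6)*(11/10)*(13/12)*(17/16)*(19/18)*(23/22)*(29/28)"
  by (simp add: euler_prod_def primes_upto_29)

lemma euler_prod_subset_le:
  assumes "S \<subseteq> primes_upto N" shows "(\<Prod>p\<in>S. real p / (real p - 1)) \<le> euler_prod N"
  unfolding euler_prod_def
proof (rule prod_mono2[OF finite_primes_upto assms])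
  fix p assume "p \<in> primes_upto N - S"
  then show "1 \<le> real p / (real p - 1)" by (simp add: primes_upto_def euler_factor_ge_1)
next
  fix p assume "p \<in> S"
  then have "prime p" using assms by (auto simp: primes_upto_def)
  then show "0 \<le> real p / (real p - 1)" using euler_factor_ge_1[of p] by linarith
qed

(* Mertens' third theorem in explicit upper-bound form for N \<ge> 29:
   euler_prod N \<le> euler_prod 29 * (ln N / ln 29) * exp 0.6123, via 1 + x \<le> exp x. *)
lemma euler_prod_large:
  assumes N: "N \<ge> 29"
  shows "euler_prod N \<le> euler_prod 29 * (ln (real N) / ln 29) * exp (6123/10000)"
proof -
  have sub: "primes_upto 29 \<subseteq> primes_upto N" using N by (rule primes_upto_mono)
  define T where "T = primes_upto N - primes_upto 29"
  have "euler_prod N = euler_prod 29 * (\<Prod>p\<in>T. real p / (real p - 1))"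
    unfolding euler_prod_def T_def using prod.subset_diff[OF sub finite_primes_upto] by (simp add: mult.commute)
  also have "(\<Prod>p\<in>T. real p / (real p - 1)) \<le> (\<Prod>p\<in>T. exp (1 / (real p - 1)))"
  proof (rule prod_mono)
    fix p assume "p \<in> T"
    then have p: "prime p" by (simp add: T_def primes_upto_def)
    have "real p / (real p - 1) = 1 + 1 / (real p - 1)" using p by (rule euler_factor_eq)
    also have "\<dots> \<le> exp (1 / (real p - 1))" by (rule exp_ge_add_one_self)
    finally show "0 \<le> real p / (real p - 1) \<and> real p / (real p - 1) \<le> exp (1 / (real p - 1))"
      using euler_factor_ge_1[OF p] by simp
  qed
  also have "\<dots> = exp (\<Sum>p\<in>T. 1 / (real p - 1))" by (simp add: T_def exp_sum)
  also have "\<dots> \<le> exp (ln (ln (real N)) - ln (ln 29) + 6123/10000)"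
    unfolding T_def using reciprocal_prime_tail_le[OF N] by simp
  also have "\<dots> = (ln (real N) / ln 29) * exp (6123/10000)"
    using N by (simp add: exp_add exp_diff)
  finally show ?thesis by (simp add: euler_prod_29 mult_left_mono mult.assoc)
qed

(* A prime factor above N is bounded below by N + 1, while the product of all prime factors of n
   is at most n; this limits the number of prime factors above N. *)
lemma card_large_prime_factors:
  assumes "n > 0"
  shows "real (card {p\<in>prime_factors n. N < p}) * ln (real N + 1) \<le> ln (real n)"
proof -
  define B where "B = {p\<in>prime_factors n. N < p}"
  have "(real N + 1) ^ card B \<le> (\<Prod>p\<in>B. real p)"
    using prod_mono[of B "\<lambda>_. real N + 1" real] by (simp add: B_def)
  also have "\<dots> \<le> (\<Prod>p\<in>prime_factors n. real p)"
    by (rule prod_mono2) (auto simp: B_def Suc_le_eq prime_factors_gt_0_nat)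
  also have "\<dots> \<le> real n"
    using prod_prime_factors_le[OF assms] by (simp flip: of_nat_prod)
  finally have "ln ((real N + 1) ^ card B) \<le> ln (real n)" by (rule ln_mono) simp
  then show ?thesis by (simp add: B_def ln_realpow)
qed

(* Splitting the prime factors of n at N: those \<le> N contribute at most euler_prod N; since their
   product is at most n < exp (N+1), there are fewer than (N+1) / ln (N+1) prime factors above N,
   each contributing a factor at most 1 + 1/N \<le> exp (1/N). *)
lemma sigma_le_euler_prod_exp:
  assumes n: "n \<ge> 1" and N: "N \<ge> 2" and lt: "ln (real n) < real N + 1"
  shows "real (divisor_sigma n) \<le> real n * (euler_prod N * exp ((real N + 1) / (real N * ln (real N + 1))))"
proof -
  define f where "f = (\<lambda>p::nat. real p / (real p - 1))"
  define A where "A = {p\<in>prime_factors n. p \<le> N}"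
  define B where "B = {p\<in>prime_factors n. N < p}"
  have f_ge_1: "1 \<le> f p" if "p \<in> prime_factors n" for p
    unfolding f_def using that by (auto intro: euler_factor_ge_1)
  have f_nonneg: "0 \<le> f p" if "p \<in> prime_factors n" for p
    using f_ge_1[OF that] by linarith
  have "prime_factors n = A \<union> B" "A \<inter> B = {}" "finite A" "finite B"
    unfolding A_def B_def by auto
  then have split: "prod f (prime_factors n) = prod f A * prod f B"
    by (simp add: prod.union_disjoint)
  have A_le: "prod f A \<le> euler_prod N"
    unfolding f_def by (rule euler_prod_subset_le) (auto simp: A_def primes_upto_def)
  have "prod f B \<le> (\<Prod>p\<in>B. exp (1 / real N))"
  proof (rule prod_mono)
    fix p assume p: "p \<in> B"
    then have "real N \<le> real p - 1" "prime p" by (auto simp: B_def)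
    then have "f p \<le> 1 + 1 / real N" using N by (simp add: f_def euler_factor_eq frac_le)
    also have "\<dots> \<le> exp (1 / real N)" by (rule exp_ge_add_one_self)
    finally show "0 \<le> f p \<and> f p \<le> exp (1 / real N)" using f_ge_1[of p] p by (simp add: B_def)
  qed
  also have "\<dots> = exp (real (card B) / real N)" by (simp flip: exp_of_nat_mult)
  also have "\<dots> \<le> exp ((real N + 1) / (real N * ln (real N + 1)))"
  proof -
    have "real (card B) * ln (real N + 1) < real N + 1"
      using card_large_prime_factors[of n N] n lt by (simp add: B_def)
    then show ?thesis using N by (simp add: field_simps)
  qed
  finally have B_le: "prod f B \<le> exp ((real N + 1) / (real N * ln (real N + 1)))" .
  have "0 \<le> prod f A" "0 \<le> prod f B"
    using f_nonneg by (intro prod_nonneg; simp add: A_def B_def)+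
  then have prod_le: "prod f (prime_factors n)
                        \<le> euler_prod N * exp ((real N + 1) / (real N * ln (real N + 1)))"
    unfolding split using A_le B_le by (intro mult_mono) auto
  have "real (divisor_sigma n) \<le> real n * prod f (prime_factors n)"
    using sigma_le_euler_factors[of n] n unfolding f_def by simp
  also have "\<dots> \<le> real n * (euler_prod N * exp ((real N + 1) / (real N * ln (real N + 1))))"
    using prod_le by (intro mult_left_mono) simp_all
  finally show ?thesis .
qed

lemma large_prime_exponent_antimono:
  assumes "1 \<le> M" "M \<le> N"
  shows "(real N + 1) / (real N * ln (real N + 1)) \<le> (real M + 1) / real M / ln (real M + 1)"
proof -
  have quot: "(real N + 1) / real N \<le> (real M + 1) / real M" using assms by (simp add: field_simps)
  have ln_le: "ln (real M + 1) \<le> ln (real N + 1)" using assms by simp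
  have ln_pos: "0 < ln (real M + 1)" using assms by simp
  have "(real N + 1) / real N / ln (real N + 1) \<le> (real M + 1) / real M / ln (real M + 1)"
    by (rule frac_le[OF _ quot ln_pos ln_le]) simp
  then show ?thesis by (simp add: field_simps)
qed

lemma euler_prod_exp_le_medium:
  assumes "11 \<le> N" "N \<le> 28"
  shows "euler_prod N * exp ((real N + 1) / (real N * ln (real N + 1))) \<le> 5228/1000 * ln (real N)"
proof -
  define t where "t = (real N + 1) / (real N * ln (real N + 1))"
  have "t \<le> (12 / 11) / ln 12"
    unfolding t_def using large_prime_exponent_antimono[of 11 N] assms by simp
  also have "\<dots> \<le> (12 / 11) / (23929/10000)"
  proof -
    have "ln 11 \<le> ln (12::real)" by simp
    then have "23929/10000 \<le> ln (12::real)" using ln11_lower by linarith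
    then show ?thesis by (intro divide_left_mono) auto
  qed
  finally have t: "t \<le> 46/100" by simp
  have "0 \<le> t" using assms by (simp add: t_def)
  then have "exp t \<le> (1 / (1 - t / 8)) ^ 8" using t exp_le_power_inverse[of t 8] by simp
  also have "\<dots> \<le> (1 / (1 - (46/100) / 8)) ^ 8"
    using t \<open>0 \<le> t\<close> by (intro power_mono) (auto simp: field_simps)
  finally have exp_t: "exp t \<le> (1 / (1 - (46/100) / 8)) ^ 8" .
  have "euler_prod N \<le> euler_prod 29"
    using euler_prod_subset_le[of "primes_upto N" 29] primes_upto_mono[of N 29] assms
    by (simp add: euler_prod_def)
  then have "euler_prod N * exp t \<le> euler_prod 29 * (1 / (1 - (46/100) / 8)) ^ 8"
    using exp_t euler_prod_ge_1[of 29] by (intro mult_mono) simp_all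
  also have "\<dots> \<le> 5228/1000 * (23929/10000)" by (simp add: euler_prod_29 power_divide)
  also have "\<dots> \<le> 5228/1000 * ln (real N)"
  proof -
    have "ln 11 \<le> ln (real N)" using assms by simp
    then show ?thesis using ln11_lower by simp
  qed
  finally show ?thesis unfolding t_def .
qed

lemma euler_prod_exp_le_large:
  assumes N: "29 \<le> N"
  shows "euler_prod N * exp ((real N + 1) / (real N * ln (real N + 1))) \<le> 5228/1000 * ln (real N)"
proof -
  define t where "t = (real N + 1) / (real N * ln (real N + 1))"
  have "t \<le> (30 / 29) / ln 30"
    unfolding t_def using large_prime_exponent_antimono[of 29 N] N by simp
  also have "\<dots> \<le> (30 / 29) / (33634/10000)"
  proof -
    have "ln 29 \<le> ln (30::real)" by simp
    then have "33634/10000 \<le> ln (30::real)" using ln29_bounds by linarith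
    then show ?thesis by (intro divide_left_mono) auto
  qed
  finally have t: "6123/10000 + t \<le> 92/100" by simp
  have "0 \<le> t" using N by (simp add: t_def)
  then have "exp (6123/10000 + t) \<le> (1 / (1 - (6123/10000 + t) / 8)) ^ 8"
    using t exp_le_power_inverse[of "6123/10000 + t" 8] by simp
  also have "\<dots> \<le> (1 / (1 - (92/100) / 8)) ^ 8"
    using t N by (intro power_mono) (auto simp: t_def field_simps)
  finally have exp_t: "exp (6123/10000) * exp t \<le> (1 / (1 - (92/100) / 8)) ^ 8"
    by (simp add: exp_add)
  have lnN: "0 < ln (real N)" using N by simp
  have "euler_prod N * exp t \<le> euler_prod 29 * (ln (real N) / ln 29) * exp (6123/10000) * exp t"
    using euler_prod_large[OF N] by (intro mult_right_mono) auto
  also have "\<dots> = euler_prod 29 / ln 29 * (exp (6123/10000) * exp t) * ln (real N)" by simp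
  also have "\<dots> \<le> euler_prod 29 / (33634/10000) * (1 / (1 - (92/100) / 8)) ^ 8 * ln (real N)"
    using ln29_bounds exp_t lnN
    by (intro mult_right_mono mult_mono divide_left_mono) (auto simp: euler_prod_29)
  also have "\<dots> \<le> 5228/1000 * ln (real N)"
    using lnN by (intro mult_right_mono) (auto simp: euler_prod_29 power_divide)
  finally show ?thesis unfolding t_def .
qed

(* For 2 \<le> x \<le> 11, 1 + x \<le> 5.228 ln x; by concavity it suffices to check the two endpoints. *)
lemma one_plus_le_ln_small:
  fixes x :: real assumes "2 \<le> x" "x \<le> 11"
  shows "1 + x \<le> 5228/1000 * ln x"
proof -
  have chord: "((11 - x) * ln 2 + (x - 2) * ln 11) / 9 \<le> ln x"
    using ln_chord[of 2 x 11] assms by simp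
  have "(11 - x) * 3 \<le> (11 - x) * (5228/1000 * ln 2)"
    using ln2_lower assms by (intro mult_left_mono) auto
  moreover have "(x - 2) * 12 \<le> (x - 2) * (5228/1000 * ln 11)"
    using ln11_lower assms by (intro mult_left_mono) auto
  ultimately show ?thesis using chord by (simp add: algebra_simps)
qed

(* The unconditional Robin-type inequality sigma n \<le> 5.228 n ln ln n for all n \<ge> 8:
   for ln n \<le> 11 from the harmonic bound, otherwise with N = floor (ln n) from the Euler product. *)
lemma sigma_le_lnln:
  assumes n: "n \<ge> 8"
  shows "real (divisor_sigma n) \<le> real n * (5228/1000 * ln (ln (real n)))"
proof -
  define x where "x = ln (real n)"
  have "ln 8 \<le> x" unfolding x_def using n by simp
  moreover have "ln (8::real) = 3 * ln 2" using ln_pow2_mult[of 1 3] by simp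
  ultimately have x2: "2 \<le> x" using ln2_lower by linarith
  show ?thesis
  proof (cases "x \<le> 11")
    case True
    have "real (divisor_sigma n) \<le> real n * (1 + x)" unfolding x_def using n by (intro sigma_le_harm) simp
    also have "\<dots> \<le> real n * (5228/1000 * ln x)"
      using one_plus_le_ln_small[OF x2 True] by (intro mult_left_mono) simp_all
    finally show ?thesis unfolding x_def .
  next
    case False
    define N where "N = nat \<lfloor>x\<rfloor>"
    have N_le: "real N \<le> x" and N_gt: "x < real N + 1" unfolding N_def using x2 by (auto simp: of_nat_nat)
    have N11: "11 \<le> N" unfolding N_def using False by (simp add: le_nat_floor)
    have "real (divisor_sigma n) \<le> real n * (euler_prod N * exp ((real N + 1) / (real N * ln (real N + 1))))"
      using n N11 N_gt by (intro sigma_le_euler_prod_exp) (simp_all add: x_def)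
    also have "\<dots> \<le> real n * (5228/1000 * ln (real N))"
      using euler_prod_exp_le_medium[OF N11] euler_prod_exp_le_large[of N]
      by (intro mult_left_mono) (linarith, simp)
    also have "\<dots> \<le> real n * (5228/1000 * ln x)"
      using N11 N_le by (intro mult_left_mono) simp_all
    finally show ?thesis unfolding x_def .
  qed
qed

lemma G_le_for_ge_8:
  assumes n: "n \<ge> 8" shows "G n \<le> 5228/1000"
proof -
  have "ln 8 \<le> ln (real n)" using n by simp
  moreover have "ln (8::real) = 3 * ln 2" using ln_pow2_mult[of 1 3] by simp
  ultimately have "1 < ln (real n)" using ln2_lower by linarith
  then have "0 < real n * ln (ln (real n))" using n by simp
  then show ?thesis
    using sigma_le_lnln[OF n] by (simp add: G_def divide_le_eq algebra_simps)
qed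

lemma divisor_sigma_4: "divisor_sigma 4 = 7"
proof -
  have "{d::nat. d dvd 4 \<and> d > 0} = {1, 2, 4}"
  proof (intro set_eqI iffI)
    fix d :: nat assume "d \<in> {d. d dvd 4 \<and> d > 0}"
    then have d: "d dvd 4" "d > 0" by auto
    then have "d \<le> 4" by (intro dvd_imp_le) auto
    then have "d = 1 \<or> d = 2 \<or> d = 3 \<or> d = 4" using d(2) by auto
    then show "d \<in> {1, 2, 4}" using d(1) by auto
  qed auto
  then show ?thesis unfolding divisor_sigma_def by simp
qed

lemma G_4_ge: "5228/1000 \<le> G 4"
proof -
  have "0 < ln (ln (4::real))"
    using ln_pow2_mult[of 1 2] ln2_lower by simp
  then have "7 / (4 * (3347/10000)) \<le> 7 / (4 * ln (ln (4::real)))"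
    using lnln4_upper by (intro divide_left_mono) auto
  then show ?thesis by (simp add: G_def divisor_sigma_4)
qed

lemma G_2_nonpos: "G 2 \<le> 0"
proof -
  have "ln (ln (2::real)) < 0" using ln_2_less_1 by simp
  then show ?thesis unfolding G_def by (intro divide_nonneg_neg) auto
qed

theorem mainTheorem2:
  shows "extraordinary 4"
proof -
  have "\<not> prime (4::nat)"
    using prime_nat_iff[of 4] by (auto dest: spec[of _ 2])
  moreover have "G (4 div p) \<le> G 4" if p: "prime p" "p dvd 4" for p
  proof -
    have "p dvd 2 ^ 2" using p by simp
    then have "p = 2" using p(1) by (metis prime_dvd_power two_is_prime_nat primes_dvd_imp_eq)
    then show ?thesis using G_2_nonpos G_4_ge by simp
  qed
  moreover have "G (a * 4) \<le> G 4" if "a > 0" for a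
  proof (cases "a = 1")
    case False
    then have "a * 4 \<ge> 8" using \<open>a > 0\<close> by simp
    then show ?thesis using G_le_for_ge_8 G_4_ge by fastforce
  qed simp
  ultimately show ?thesis unfolding extraordinary_def by auto
qed

end
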